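(* Let $\alpha\ge0$ and $\gamma\in\mathcal{B}$. Then there exist real functions $d_0,d_1$ on $[0,\Lambda)$ with $d_1(|p|)\ge1$ and $d_0(|p|)\ge1$ such that $D_\gamma(p)=d_1(|p|)\,\boldsymbol{\alpha}\cdot p+d_0(|p|)\,\beta$ for a.e. $p\in B(0,\Lambda)$. In particular $|D_\gamma(p)|\ge|D^0(p)|\ge|p|$ (as matrices) for a.e. $p\in B(0,\Lambda)$.
   Context: Let $\alpha_1,\alpha_2,\alpha_3,\beta$ be the standard $4\times4$ Dirac matrices, $D^0(p)=\boldsymbol{\alpha}\cdot p+\beta$, $\Lambda>0$. $\mathcal{A}$ is the set of measurable $\gamma:B(0,\Lambda)\to\{$hermitian $4\times4$ matrices$\}$ with $-\frac12\le\gamma(p)\le\frac12$; $\mathcal{B}=\{\gamma\in\mathcal{A}:\gamma(p)=f_1(|p|)\boldsymbol{\alpha}\cdot p+f_0(|p|)\beta\ \text{with real } f_0,f_1\le0\}$. For $\gamma\in\mathcal{A}$, $D_\gamma(p)=D^0(p)-\frac{\alpha}{2\pi^2}\int_{B(0,\Lambda)}\frac{\gamma(q)}{|p-q|^2}dq$ (the Fourier multiplier of the operator $D^0-\alpha\frac{\gamma(x-y)}{|x-y|}$). *)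

theory Defs
  imports "HOL-Analysis.Analysis" "Jordan_Normal_Form.Matrix"
begin

definition adj :: "complex mat \<Rightarrow> complex mat" where
  "adj A = mat (dim_col A) (dim_row A) (\<lambda>(i,j). cnj (A $$ (j,i)))"

definition hermitian_mat :: "complex mat \<Rightarrow> bool" where
  "hermitian_mat A \<longleftrightarrow> A \<in> carrier_mat (dim_row A) (dim_row A) \<and> adj A = A"

definition qform :: "complex mat \<Rightarrow> complex vec \<Rightarrow> complex" where
  "qform A v = (\<Sum>i<dim_row A. \<Sum>j<dim_col A. cnj (v $ i) * A $$ (i,j) * v $ j)"

definition psd_mat :: "complex mat \<Rightarrow> bool" where
  "psd_mat A \<longleftrightarrow> A \<in> carrier_mat (dim_row A) (dim_row A) \<and>
     (\<forall>v\<in>carrier_vec (dim_row A). Im (qform A v) = 0 \<and> Re (qform A v) \<ge> 0)"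

definition loewner_le :: "complex mat \<Rightarrow> complex mat \<Rightarrow> bool" where
  "loewner_le A B \<longleftrightarrow> dim_row A = dim_row B \<and> dim_col A = dim_col B \<and> psd_mat (B - A)"

text \<open>matrix absolute value |A| = sqrt(A^* A), the unique psd square root\<close>
definition mat_abs :: "complex mat \<Rightarrow> complex mat" where
  "mat_abs A = (THE B. B \<in> carrier_mat (dim_col A) (dim_col A) \<and> psd_mat B \<and> B * B = adj A * A)"

definition dirac_beta :: "complex mat" where
  "dirac_beta = mat_of_rows_list 4
     [[1,0,0,0],[0,1,0,0],[0,0,-1,0],[0,0,0,-1]]"

definition dirac_alpha1 :: "complex mat" where
  "dirac_alpha1 = mat_of_rows_list 4
     [[0,0,0,1],[0,0,1,0],[0,1,0,0],[1,0,0,0]]"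

definition dirac_alpha2 :: "complex mat" where
  "dirac_alpha2 = mat_of_rows_list 4
     [[0,0,0,-\<i>],[0,0,\<i>,0],[0,-\<i>,0,0],[\<i>,0,0,0]]"

definition dirac_alpha3 :: "complex mat" where
  "dirac_alpha3 = mat_of_rows_list 4
     [[0,0,1,0],[0,0,0,-1],[1,0,0,0],[0,-1,0,0]]"

definition alpha_dot :: "real^3 \<Rightarrow> complex mat" where
  "alpha_dot p = complex_of_real (p $ 1) \<cdot>\<^sub>m dirac_alpha1
              + complex_of_real (p $ 2) \<cdot>\<^sub>m dirac_alpha2
              + complex_of_real (p $ 3) \<cdot>\<^sub>m dirac_alpha3"

definition D0 :: "real^3 \<Rightarrow> complex mat" where
  "D0 p = alpha_dot p + dirac_beta"

definition setA :: "real \<Rightarrow> (real^3 \<Rightarrow> complex mat) set" where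
  "setA \<Lambda> = {\<gamma>. (\<forall>p\<in>ball 0 \<Lambda>. \<gamma> p \<in> carrier_mat 4 4 \<and> hermitian_mat (\<gamma> p)
        \<and> loewner_le (complex_of_real (-1/2) \<cdot>\<^sub>m 1\<^sub>m 4) (\<gamma> p)
        \<and> loewner_le (\<gamma> p) (complex_of_real (1/2) \<cdot>\<^sub>m 1\<^sub>m 4))
     \<and> (\<forall>i<4. \<forall>j<4. (\<lambda>q. \<gamma> q $$ (i,j)) \<in> borel_measurable (lebesgue_on (ball 0 \<Lambda>)))}"

definition setB :: "real \<Rightarrow> (real^3 \<Rightarrow> complex mat) set" where
  "setB \<Lambda> = {\<gamma>. \<gamma> \<in> setA \<Lambda> \<and>
     (\<exists>f0 f1 :: real \<Rightarrow> real. (\<forall>r\<in>{0..<\<Lambda>}. f0 r \<le> 0 \<and> f1 r \<le> 0) \<and>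
        (\<forall>p\<in>ball 0 \<Lambda>. \<gamma> p = complex_of_real (f1 (norm p)) \<cdot>\<^sub>m alpha_dot p
                              + complex_of_real (f0 (norm p)) \<cdot>\<^sub>m dirac_beta))}"

definition Dgamma :: "real \<Rightarrow> real \<Rightarrow> (real^3 \<Rightarrow> complex mat) \<Rightarrow> real^3 \<Rightarrow> complex mat" where
  "Dgamma \<alpha> \<Lambda> \<gamma> p = D0 p - complex_of_real (\<alpha> / (2 * pi\<^sup>2)) \<cdot>\<^sub>m
     mat 4 4 (\<lambda>(i,j). integral (ball 0 \<Lambda>)
        (\<lambda>q. \<gamma> q $$ (i,j) / complex_of_real ((norm (p - q))\<^sup>2)))"

end

theory Submission
  imports Defs
begin

text \<open>
  For \<gamma> in the class B, \<gamma>(q) = f1(|q|) \<alpha>\<cdot>q + f0(|q|) \<beta> with f0, f1 \<le> 0, so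
  every entry of the convolution integral \<integral> \<gamma>(q) / |p - q|^2 dq is a fixed real-linear
  combination of the Dirac matrices with coefficients given by the scalar integral
  S(p) = \<integral> f0(|q|) / |p - q|^2 dq and the vector integral V(p) = \<integral> f1(|q|) q / |p - q|^2 dq.
  The kernel 1/|p - q|^2 is integrable near its singularity (dyadic shell estimate), so
  both integrals exist.  Rotation invariance of Lebesgue measure makes S invariant and V
  equivariant under orthogonal maps; an equivariant field is radial, V(p) = c(p) p, and
  S and c depend on |p| only.  Sign information: S \<le> 0 trivially, and V(p)\<cdot>p \<le> 0 by pairing
  q with its mirror image in the hyperplane orthogonal to p.  Hence
  D_\<gamma>(p) = d1(|p|) \<alpha>\<cdot>p + d0(|p|) \<beta> with d0, d1 \<ge> 1 for every p (not only almost
  every p).  Finally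
  (a \<alpha>\<cdot>p + b \<beta>)^2 = (a^2|p|^2 + b^2) I, so all absolute values involved are scalar
  matrices and the Loewner inequalities reduce to inequalities between real numbers.
\<close>

section \<open>Scalar matrices, positivity and absolute value\<close>

lemma cnj_mult_self: "cnj z * z = complex_of_real ((cmod z)^2)"
  using complex_norm_square[of z] by (simp add: mult.commute)

lemma qform_scalar:
  assumes "v \<in> carrier_vec n"
  shows "qform (complex_of_real c \<cdot>\<^sub>m 1\<^sub>m n) v = complex_of_real (c * (\<Sum>i<n. (cmod (v $ i))^2))"
proof -
  have "qform (complex_of_real c \<cdot>\<^sub>m 1\<^sub>m n) v
      = (\<Sum>i<n. \<Sum>j<n. cnj (v $ i) * (if i = j then complex_of_real c else 0) * v $ j)"
    by (auto simp: qform_def intro!: sum.cong)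
  also have "\<dots> = (\<Sum>i<n. complex_of_real c * (cnj (v $ i) * v $ i))"
  proof (rule sum.cong)
    fix i assume "i \<in> {..<n}"
    have "cnj (v $ i) * (if i = j then complex_of_real c else 0) * v $ j
        = (if i = j then complex_of_real c * (cnj (v $ i) * v $ i) else 0)" for j
      by auto
    then show "(\<Sum>j<n. cnj (v $ i) * (if i = j then complex_of_real c else 0) * v $ j)
        = complex_of_real c * (cnj (v $ i) * v $ i)"
      using \<open>i \<in> {..<n}\<close> by simp
  qed simp
  also have "\<dots> = complex_of_real c * (\<Sum>i<n. complex_of_real ((cmod (v $ i))^2))"
    by (simp only: cnj_mult_self sum_distrib_left)
  finally show ?thesis by simp
qed

lemma psd_scalar: "c \<ge> 0 \<Longrightarrow> psd_mat (complex_of_real c \<cdot>\<^sub>m 1\<^sub>m n)"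
  unfolding psd_mat_def by (auto simp: qform_scalar sum_nonneg)

lemma loewner_scalar:
  assumes "a \<le> b"
  shows "loewner_le (complex_of_real a \<cdot>\<^sub>m 1\<^sub>m n) (complex_of_real b \<cdot>\<^sub>m 1\<^sub>m n)"
proof -
  have "complex_of_real b \<cdot>\<^sub>m 1\<^sub>m n - complex_of_real a \<cdot>\<^sub>m 1\<^sub>m n = complex_of_real (b - a) \<cdot>\<^sub>m 1\<^sub>m n"
    by (rule eq_matI) auto
  then show ?thesis unfolding loewner_le_def using psd_scalar[of "b - a"] assms by simp
qed

lemma psd_no_negative_eigenvector:
  fixes B :: "complex mat" and v :: "nat \<Rightarrow> complex"
  assumes B: "B \<in> carrier_mat n n" and psd: "psd_mat B" and s: "s > 0"
    and eig: "\<And>i. i < n \<Longrightarrow> (\<Sum>k<n. B $$ (i,k) * v k) = - complex_of_real s * v i"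
    and i: "i < n"
  shows "v i = 0"
proof -
  define w where "w = vec n v"
  have "qform B w = (\<Sum>i<n. cnj (v i) * (\<Sum>k<n. B $$ (i,k) * v k))"
    using B by (simp add: qform_def w_def sum_distrib_left mult.assoc)
  also have "\<dots> = (\<Sum>i<n. cnj (v i) * (- complex_of_real s * v i))"
    by (rule sum.cong) (simp_all add: eig)
  also have "\<dots> = - complex_of_real s * (\<Sum>i<n. cnj (v i) * v i)"
    by (simp add: sum_distrib_left algebra_simps)
  also have "\<dots> = - complex_of_real s * (\<Sum>i<n. complex_of_real ((cmod (v i))^2))"
    by (simp only: cnj_mult_self)
  finally have "Re (qform B w) = - s * (\<Sum>i<n. (cmod (v i))^2)"
    by (simp add: Re_sum)
  moreover have "Re (qform B w) \<ge> 0"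
    using psd B unfolding psd_mat_def by (simp add: w_def)
  ultimately have "(\<Sum>i<n. (cmod (v i))^2) \<le> 0"
    using s by (simp add: mult_le_0_iff)
  then have "(cmod (v i))^2 = 0"
    using sum_nonneg_eq_0_iff[of "{..<n}" "\<lambda>k. (cmod (v k))^2"] i
    by (simp add: order_antisym sum_nonneg)
  then show ?thesis by simp
qed

lemma psd_sqrt_of_scalar:
  fixes B :: "complex mat"
  assumes B: "B \<in> carrier_mat n n" and psd: "psd_mat B" and s: "s > 0"
    and sq: "B * B = complex_of_real (s^2) \<cdot>\<^sub>m 1\<^sub>m n"
  shows "B = complex_of_real s \<cdot>\<^sub>m 1\<^sub>m n"
proof (rule eq_matI)
  fix i j assume "i < dim_row (complex_of_real s \<cdot>\<^sub>m 1\<^sub>m n)" "j < dim_col (complex_of_real s \<cdot>\<^sub>m 1\<^sub>m n)"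
  then have ij: "i < n" "j < n" by auto
  text \<open>Column j of B - s I is an eigenvector of B for the eigenvalue -s.\<close>
  define v where "v k = B $$ (k,j) - (if k = j then complex_of_real s else 0)" for k
  have "(\<Sum>k<n. B $$ (l,k) * v k) = - complex_of_real s * v l" if l: "l < n" for l
  proof -
    have "(\<Sum>k<n. B $$ (l,k) * B $$ (k,j)) = (if l = j then complex_of_real (s^2) else 0)"
      using arg_cong[OF sq, of "\<lambda>M. M $$ (l,j)"] l ij B by (simp add: scalar_prod_def atLeast0LessThan)
    moreover have "(\<Sum>k<n. B $$ (l,k) * (if k = j then complex_of_real s else 0)) = B $$ (l,j) * complex_of_real s"
      using ij by (simp add: if_distrib[where f="\<lambda>x. _ * x"] cong: if_cong)
    ultimately show ?thesis
      by (simp add: v_def algebra_simps sum_subtractf power2_eq_square)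
  qed
  from psd_no_negative_eigenvector[OF B psd s this ij(1)]
  show "B $$ (i,j) = (complex_of_real s \<cdot>\<^sub>m 1\<^sub>m n) $$ (i,j)"
    using ij by (simp add: v_def split: if_splits)
qed (use B in auto)

lemma mat_abs_scalar:
  assumes D: "D \<in> carrier_mat n n" and s: "s > 0"
    and sq: "adj D * D = complex_of_real (s^2) \<cdot>\<^sub>m 1\<^sub>m n"
  shows "mat_abs D = complex_of_real s \<cdot>\<^sub>m 1\<^sub>m n"
  unfolding mat_abs_def
proof (rule the_equality)
  show "complex_of_real s \<cdot>\<^sub>m 1\<^sub>m n \<in> carrier_mat (dim_col D) (dim_col D) \<and> psd_mat (complex_of_real s \<cdot>\<^sub>m 1\<^sub>m n)
      \<and> complex_of_real s \<cdot>\<^sub>m 1\<^sub>m n * (complex_of_real s \<cdot>\<^sub>m 1\<^sub>m n) = adj D * D"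
    using D s by (auto simp: psd_scalar sq power2_eq_square intro!: eq_matI)
  fix B assume "B \<in> carrier_mat (dim_col D) (dim_col D) \<and> psd_mat B \<and> B * B = adj D * D"
  then show "B = complex_of_real s \<cdot>\<^sub>m 1\<^sub>m n"
    using psd_sqrt_of_scalar[of B n s] D s sq by auto
qed


section \<open>Dirac-type matrices  a \<alpha>\<cdot>p + b \<beta>\<close>

lemma mat4_eqI:
  assumes "A \<in> carrier_mat 4 4" "B \<in> carrier_mat 4 4"
    and "\<And>i j. i \<in> {0,1,2,3} \<Longrightarrow> j \<in> {0,1,2,3} \<Longrightarrow> A $$ (i,j) = B $$ (i,j)"
  shows "A = B"
proof (rule eq_matI)
  fix i j assume "i < dim_row B" "j < dim_col B"
  then have "i \<in> {0,1,2,3}" "j \<in> {0,1,2,3}" using assms by auto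
  then show "A $$ (i,j) = B $$ (i,j)" using assms by blast
qed (use assms in auto)

lemma sum_lessThan_4: "(\<Sum>i<4. f i) = f 0 + f 1 + f 2 + f (3::nat)"
  by (simp add: numeral_eq_Suc)

definition dirac_form :: "real \<Rightarrow> real \<Rightarrow> real^3 \<Rightarrow> complex mat" where
  "dirac_form a b p = complex_of_real a \<cdot>\<^sub>m alpha_dot p + complex_of_real b \<cdot>\<^sub>m dirac_beta"

definition dirac_entry :: "real^3 \<Rightarrow> real \<Rightarrow> nat \<times> nat \<Rightarrow> complex" where
  "dirac_entry w b ij = complex_of_real (w $ 1) * dirac_alpha1 $$ ij + complex_of_real (w $ 2) * dirac_alpha2 $$ ij
     + complex_of_real (w $ 3) * dirac_alpha3 $$ ij + complex_of_real b * dirac_beta $$ ij"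

lemma dirac_matrices_carrier [simp]:
  "dirac_beta \<in> carrier_mat 4 4" "dirac_alpha1 \<in> carrier_mat 4 4"
  "dirac_alpha2 \<in> carrier_mat 4 4" "dirac_alpha3 \<in> carrier_mat 4 4"
  by (simp_all add: dirac_beta_def dirac_alpha1_def dirac_alpha2_def dirac_alpha3_def
      mat_of_rows_list_def numeral_eq_Suc)

lemma dirac_matrices_dims [simp]:
  "dim_row dirac_beta = 4" "dim_col dirac_beta = 4"
  "dim_row dirac_alpha1 = 4" "dim_col dirac_alpha1 = 4"
  "dim_row dirac_alpha2 = 4" "dim_col dirac_alpha2 = 4"
  "dim_row dirac_alpha3 = 4" "dim_col dirac_alpha3 = 4"
  by (simp_all add: dirac_beta_def dirac_alpha1_def dirac_alpha2_def dirac_alpha3_def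
      mat_of_rows_list_def numeral_eq_Suc)

lemma alpha_dot_carrier [simp]: "alpha_dot p \<in> carrier_mat 4 4"
  by (simp add: alpha_dot_def)

lemma dirac_form_carrier [simp]: "dirac_form a b p \<in> carrier_mat 4 4"
  by (simp add: dirac_form_def)

lemma dirac_form_dims [simp]: "dim_row (dirac_form a b p) = 4" "dim_col (dirac_form a b p) = 4"
  using carrier_matD[OF dirac_form_carrier] by blast+

lemma dirac_form_entry:
  "i < 4 \<Longrightarrow> j < 4 \<Longrightarrow> dirac_form a b p $$ (i,j) = dirac_entry (a *\<^sub>R p) b (i,j)"
  by (simp add: dirac_form_def dirac_entry_def alpha_dot_def algebra_simps)

lemma D0_eq_dirac_form: "D0 p = dirac_form 1 1 p"
  by (rule mat4_eqI) (auto simp: D0_def dirac_form_entry dirac_entry_def alpha_dot_def)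

lemma dirac_entry_scale:
  "complex_of_real c * dirac_entry w b ij = dirac_entry (c *\<^sub>R w) (c * b) ij"
  by (simp add: dirac_entry_def algebra_simps)

lemma dirac_entry_diff:
  "dirac_entry w b ij - dirac_entry w' b' ij = dirac_entry (w - w') (b - b') ij"
  by (simp add: dirac_entry_def algebra_simps)

lemma integral_dirac_entry:
  fixes W :: "'n::euclidean_space \<Rightarrow> real^3" and s :: "'n \<Rightarrow> real"
  assumes W: "W integrable_on S" and s: "s integrable_on S"
  shows "integral S (\<lambda>q. dirac_entry (W q) (s q) ij) = dirac_entry (integral S W) (integral S s) ij"
proof -
  have comb: "((\<lambda>q. complex_of_real (g q) * z) has_integral complex_of_real (integral S g) * z) S"
    if "g integrable_on S" for g :: "'n \<Rightarrow> real" and z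
    by (intro has_integral_mult_left has_integral_of_real integrable_integral that)
  have "((\<lambda>q. complex_of_real (W q $ k) * z) has_integral complex_of_real (integral S W $ k) * z) S"
    for k z
    using comb[of "\<lambda>q. W q $ k" z] integrable_component[OF W, of "axis k 1"]
      integral_component_eq_cart[OF W, of k]
    by (simp add: inner_axis)
  then show ?thesis
    unfolding dirac_entry_def by (intro integral_unique has_integral_add comb s)
qed

lemma dirac_form_explicit:
  "dirac_form a b p = mat_of_rows_list 4
    [[b, 0, a * p $ 3, a * (p $ 1 - \<i> * p $ 2)],
     [0, b, a * (p $ 1 + \<i> * p $ 2), - a * p $ 3],
     [a * p $ 3, a * (p $ 1 - \<i> * p $ 2), - b, 0],
     [a * (p $ 1 + \<i> * p $ 2), - a * p $ 3, 0, - b]]"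
  apply (rule mat4_eqI, simp, simp add: mat_of_rows_list_def numeral_eq_Suc)
  by (auto simp: dirac_form_entry dirac_entry_def dirac_beta_def dirac_alpha1_def dirac_alpha2_def
      dirac_alpha3_def mat_of_rows_list_def numeral_eq_Suc algebra_simps)

lemma adj_dirac_form: "adj (dirac_form a b p) = dirac_form a b p"
  apply (rule mat4_eqI, simp add: adj_def, simp)
  by (auto simp: adj_def dirac_form_explicit mat_of_rows_list_def)

text \<open>The Clifford relations in the form (a \<alpha>\<cdot>p + b \<beta>)^2 = (a^2 |p|^2 + b^2) I.\<close>
lemma dirac_form_square:
  "dirac_form a b p * dirac_form a b p = complex_of_real (a^2 * (norm p)^2 + b^2) \<cdot>\<^sub>m 1\<^sub>m 4"
proof -
  have "(norm p)^2 = p \<bullet> p" by (rule power2_norm_eq_inner)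
  then have n: "(norm p)^2 = (p $ 1)^2 + (p $ 2)^2 + (p $ 3)^2"
    by (simp add: inner_vec_def sum_3 power2_eq_square)
  show ?thesis
    unfolding n
    by (rule mat4_eqI[OF mult_carrier_mat[OF dirac_form_carrier dirac_form_carrier]])
      (auto simp: dirac_form_explicit mat_of_rows_list_def scalar_prod_def numeral_eq_Suc
        algebra_simps power2_eq_square)
qed

lemma mat_abs_dirac_form:
  assumes "b \<noteq> 0"
  shows "mat_abs (dirac_form a b p) = complex_of_real (sqrt (a^2 * (norm p)^2 + b^2)) \<cdot>\<^sub>m 1\<^sub>m 4"
proof (rule mat_abs_scalar)
  have pos: "a^2 * (norm p)^2 + b^2 > 0" using assms by (simp add: add_nonneg_pos)
  then show "sqrt (a^2 * (norm p)^2 + b^2) > 0" by simp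
  show "adj (dirac_form a b p) * dirac_form a b p
      = complex_of_real ((sqrt (a^2 * (norm p)^2 + b^2))^2) \<cdot>\<^sub>m 1\<^sub>m 4"
    using pos by (simp add: adj_dirac_form dirac_form_square)
qed simp

lemma mat_abs_D0_le_dirac_form:
  assumes "1 \<le> a" "1 \<le> b"
  shows "loewner_le (mat_abs (D0 p)) (mat_abs (dirac_form a b p))"
proof -
  have "1 \<le> a^2" "1 \<le> b^2" using assms by (simp_all add: one_le_power)
  then have "1^2 * (norm p)^2 + 1^2 \<le> a^2 * (norm p)^2 + b^2"
    using mult_right_mono[of 1 "a^2" "(norm p)^2"] by simp
  then show ?thesis
    unfolding D0_eq_dirac_form using assms
    by (simp only: mat_abs_dirac_form) (intro loewner_scalar real_sqrt_le_mono, simp_all)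
qed

lemma norm_le_mat_abs_D0: "loewner_le (complex_of_real (norm p) \<cdot>\<^sub>m 1\<^sub>m 4) (mat_abs (D0 p))"
  unfolding D0_eq_dirac_form mat_abs_dirac_form[OF one_neq_zero]
  by (intro loewner_scalar real_le_rsqrt) simp

text \<open>The lower bound -1/2 \<le> a \<alpha>\<cdot>q + b \<beta> forces -1/2 \<le> b and |a q_k| \<le> 1/2; it is
  tested on vectors e_0 + z e_j.\<close>
lemma dirac_form_lower_bounds:
  fixes q :: "real^3" and k :: 3
  assumes "loewner_le (complex_of_real (-1/2) \<cdot>\<^sub>m 1\<^sub>m 4) (dirac_form a b q)"
  shows "-1/2 \<le> b" "\<bar>a * q $ k\<bar> \<le> 1/2"
proof -
  let ?M = "dirac_form a b q - complex_of_real (-1/2) \<cdot>\<^sub>m 1\<^sub>m 4"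
  have P: "Re (qform ?M v) \<ge> 0" if "v \<in> carrier_vec 4" for v
    using assms that unfolding loewner_le_def psd_mat_def by auto
  define e where "e j z = vec 4 (\<lambda>k. if k = 0 then 1 else if k = j then z else (0::complex))" for j z
  have ec: "e j z \<in> carrier_vec 4" for j z by (simp add: e_def)
  have Q: "qform ?M (e j z) = (\<Sum>i<4. \<Sum>k<4. cnj (e j z $ i) * ?M $$ (i,k) * e j z $ k)" for j z
    by (simp add: qform_def)
  note ev = sum_lessThan_4 e_def dirac_form_explicit mat_of_rows_list_def
  have "Re (qform ?M (e 1 0)) = b + 1/2" unfolding Q by (simp add: ev)
  then show "-1/2 \<le> b" using P[OF ec, of 1 0] by simp
  have "Re (qform ?M (e 2 1)) = 1 + 2 * (a * q $ 3)" "Re (qform ?M (e 2 (-1))) = 1 - 2 * (a * q $ 3)"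
    "Re (qform ?M (e 3 1)) = 1 + 2 * (a * q $ 1)" "Re (qform ?M (e 3 (-1))) = 1 - 2 * (a * q $ 1)"
    "Re (qform ?M (e 3 \<i>)) = 1 + 2 * (a * q $ 2)" "Re (qform ?M (e 3 (-\<i>))) = 1 - 2 * (a * q $ 2)"
    unfolding Q by (simp_all add: ev)
  moreover have "k = 1 \<or> k = 2 \<or> k = 3" using exhaust_3 by blast
  ultimately show "\<bar>a * q $ k\<bar> \<le> 1/2"
    using P[OF ec, of 2 1] P[OF ec, of 2 "-1"] P[OF ec, of 3 1] P[OF ec, of 3 "-1"]
      P[OF ec, of 3 \<i>] P[OF ec, of 3 "-\<i>"] by auto
qed


section \<open>Integrability of the Coulomb-type kernel\<close>

lemma dyadic_shell:
  fixes d R :: real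
  assumes "0 < d" "d < R"
  obtains k :: nat where "R / 2 ^ Suc k \<le> d" "d < R / 2 ^ k"
proof -
  obtain n where n: "(1/2::real) ^ n < d / R"
    using real_arch_pow_inv[of "d / R" "1/2"] assms by auto
  define m where "m = (LEAST n. R / 2 ^ n \<le> d)"
  have m: "R / 2 ^ m \<le> d"
    unfolding m_def by (rule LeastI[of _ n]) (use n assms in \<open>simp add: field_simps power_divide\<close>)
  moreover have "m \<noteq> 0" using m assms by (intro notI) simp
  then obtain k where k: "m = Suc k" using not0_implies_Suc by blast
  have "\<not> R / 2 ^ k \<le> d"
    using not_less_Least[of k "\<lambda>n. R / 2 ^ n \<le> d"] k m_def by simp
  ultimately show ?thesis using that k by auto
qed

lemma ennreal_le_suminf: "(f :: nat \<Rightarrow> ennreal) k \<le> suminf f"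
  using sum_le_suminf[OF summableI, of "{k}" f] by simp

lemma inverse_power_le_dyadic_sum:
  fixes p q :: "'a::real_normed_vector" and R :: real and m :: nat
  assumes R: "R > 0"
  shows "ennreal (indicator (ball p R) q / norm (p - q) ^ m)
           \<le> (\<Sum>k. ennreal ((2 ^ Suc k / R) ^ m) * indicator (ball p (R / 2 ^ k)) q)"
    (is "?lhs \<le> suminf ?g")
proof -
  have "\<exists>k. ?lhs \<le> ?g k"
  proof (cases "q \<in> ball p R \<and> q \<noteq> p")
    case True
    then have d: "0 < norm (p - q)" "norm (p - q) < R" by (auto simp: dist_norm)
    obtain k where k: "R / 2 ^ Suc k \<le> norm (p - q)" "norm (p - q) < R / 2 ^ k"
      using dyadic_shell[OF d] .
    have "1 / norm (p - q) \<le> 2 ^ Suc k / R"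
      using R k(1) d(1) by (simp add: divide_le_eq le_divide_eq mult.commute)
    then have "1 / norm (p - q) ^ m \<le> (2 ^ Suc k / R) ^ m"
      unfolding power_one_over[symmetric] by (rule power_mono) simp
    then have "?lhs \<le> ?g k" using True k(2) by (simp add: dist_norm ennreal_leI)
    then show ?thesis ..
  next
    case False
    have "1 / 0 ^ m \<le> (2 / R) ^ m" using R by (cases m) auto
    then have "?lhs \<le> ?g 0" using False R by (auto simp: ennreal_leI)
    then show ?thesis ..
  qed
  then obtain k where "?lhs \<le> ?g k" ..
  then show ?thesis using ennreal_le_suminf[of ?g k] by (rule order_trans)
qed

text \<open>The dominating series has finite integral when m is below the dimension:
  the k-th term is a constant times (2^(m - n))^k.\<close>
lemma dyadic_ball_integral:
  fixes p :: "'a::euclidean_space" and R :: real and m :: nat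
  assumes R: "R > 0" and m: "m < DIM('a)"
  shows "(\<Sum>k. \<integral>\<^sup>+q. ennreal ((2 ^ Suc k / R) ^ m) * indicator (ball p (R / 2 ^ k)) q \<partial>lborel) < \<infinity>"
proof -
  define V where "V = unit_ball_vol (real DIM('a))"
  define e where "e = DIM('a) - m"
  have e: "e > 0" "DIM('a) = m + e" using m by (auto simp: e_def)
  have shell: "(\<integral>\<^sup>+q. ennreal ((2 ^ Suc k / R) ^ m) * indicator (ball p (R / 2 ^ k)) q \<partial>lborel)
      = ennreal (V * 2 ^ m * R ^ e * ((1/2) ^ e) ^ k)" for k
  proof -
    have "(2 ^ Suc k / R) ^ m * (V * (R / 2 ^ k) ^ (m + e)) = V * 2 ^ m * R ^ e * (1 / 2 ^ k) ^ e"
      using R by (simp add: power_add power_divide power_mult_distrib)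
    also have "\<dots> = V * 2 ^ m * R ^ e * ((1/2) ^ e) ^ k"
      by (simp add: power_mult[symmetric] mult.commute power_one_over)
    finally have alg: "(2 ^ Suc k / R) ^ m * (V * (R / 2 ^ k) ^ (m + e)) = V * 2 ^ m * R ^ e * ((1/2) ^ e) ^ k" .
    then show ?thesis
      using R alg by (simp add: nn_integral_cmult_indicator emeasure_ball V_def e(2) flip: ennreal_mult)
  qed
  have summ: "summable (\<lambda>k. V * 2 ^ m * R ^ e * ((1/2::real) ^ e) ^ k)"
    using e(1) by (intro summable_mult summable_geometric) (simp add: power_less_one_iff)
  have "0 \<le> V * 2 ^ m * R ^ e * ((1/2::real) ^ e) ^ k" for k
    using R by (simp add: V_def)
  from ennreal_suminf_neq_top[OF summ this] show ?thesis
    unfolding shell by (simp add: less_top)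
qed

lemma inverse_power_set_integrable:
  fixes p :: "'a::euclidean_space" and R :: real and m :: nat
  assumes R: "R > 0" and m: "m < DIM('a)"
  shows "set_integrable lborel (ball p R) (\<lambda>q. 1 / norm (p - q) ^ m)"
  unfolding set_integrable_def
proof (rule integrableI_bounded)
  have [measurable]: "ball p R \<in> sets borel" by simp
  show "(\<lambda>q. indicat_real (ball p R) q *\<^sub>R (1 / norm (p - q) ^ m)) \<in> borel_measurable lborel"
    by measurable
  have "(\<integral>\<^sup>+q. ennreal (norm (indicat_real (ball p R) q *\<^sub>R (1 / norm (p - q) ^ m))) \<partial>lborel)
      \<le> (\<integral>\<^sup>+q. (\<Sum>k. ennreal ((2 ^ Suc k / R) ^ m) * indicator (ball p (R / 2 ^ k)) q) \<partial>lborel)"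
  proof (rule nn_integral_mono)
    fix q
    have "norm (indicat_real (ball p R) q *\<^sub>R (1 / norm (p - q) ^ m)) = indicator (ball p R) q / norm (p - q) ^ m"
      by (simp add: indicator_def)
    then show "ennreal (norm (indicat_real (ball p R) q *\<^sub>R (1 / norm (p - q) ^ m)))
        \<le> (\<Sum>k. ennreal ((2 ^ Suc k / R) ^ m) * indicator (ball p (R / 2 ^ k)) q)"
      using inverse_power_le_dyadic_sum[OF R] by simp
  qed
  also have "\<dots> = (\<Sum>k. \<integral>\<^sup>+q. ennreal ((2 ^ Suc k / R) ^ m) * indicator (ball p (R / 2 ^ k)) q \<partial>lborel)"
    by (intro nn_integral_suminf borel_measurable_times_ennreal borel_measurable_indicator) auto
  also have "\<dots> < \<infinity>" by (rule dyadic_ball_integral[OF R m])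
  finally show "(\<integral>\<^sup>+q. ennreal (norm (indicat_real (ball p R) q *\<^sub>R (1 / norm (p - q) ^ m))) \<partial>lborel) < \<infinity>" .
qed

lemma inverse_power_absolutely_integrable:
  fixes p :: "'a::euclidean_space" and m :: nat
  assumes S: "bounded S" "S \<in> sets lebesgue" and m: "m < DIM('a)"
  shows "(\<lambda>q. 1 / norm (p - q) ^ m) absolutely_integrable_on S"
proof -
  obtain R where R: "R > 0" "S \<subseteq> ball p R" using bounded_subset_ballD[OF S(1)] by blast
  have [measurable]: "ball p R \<in> sets borel" by simp
  have "set_integrable lebesgue (ball p R) (\<lambda>q. 1 / norm (p - q) ^ m)"
    using inverse_power_set_integrable[OF R(1) m] unfolding set_integrable_def
    by (subst integrable_completion) measurable
  then show ?thesis by (rule set_integrable_subset[OF _ S(2) R(2)])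
qed


section \<open>Rotation invariance and radial functions\<close>

lemma orthogonal_change_of_variables:
  fixes f :: "real^'m::{finite,wellorder} \<Rightarrow> real^'n" and T :: "real^'m::_ \<Rightarrow> real^'m::_"
  assumes T: "orthogonal_transformation T" and f: "f absolutely_integrable_on ball 0 r"
  shows "(f \<circ> T) absolutely_integrable_on ball 0 r"
    and "integral (ball 0 r) (f \<circ> T) = integral (ball 0 r) f"
proof -
  have lin: "linear T" using T by (simp add: orthogonal_transformation_linear)
  have img: "T ` ball 0 r = ball 0 r"
    using image_orthogonal_transformation_ball[OF T, of 0 r] lin by (simp add: linear_0)
  have det: "\<bar>det (matrix T)\<bar> = 1" using T by simp
  have f': "f absolutely_integrable_on T ` ball 0 r" using f img by simp
  show "(f \<circ> T) absolutely_integrable_on ball 0 r"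
    using absolutely_integrable_on_linear_image[OF lin, where f=f and S="ball 0 r"] f' det by auto
  have "integral (T ` ball 0 r) f = \<bar>det (matrix T)\<bar> *\<^sub>R integral (ball 0 r) (f \<circ> T)"
    by (rule integral_change_of_variables_linear[OF lin]) (use f' in blast)
  then show "integral (ball 0 r) (f \<circ> T) = integral (ball 0 r) f" using img det by simp
qed

lemma orthogonal_change_of_variables_real:
  fixes g :: "real^'m::{finite,wellorder} \<Rightarrow> real" and T :: "real^'m::_ \<Rightarrow> real^'m::_"
  assumes T: "orthogonal_transformation T" and g: "g absolutely_integrable_on ball 0 r"
  shows "(g \<circ> T) absolutely_integrable_on ball 0 r"
    and "integral (ball 0 r) (g \<circ> T) = integral (ball 0 r) g"
proof -
  define G where "G = (\<lambda>x. Finite_Cartesian_Product.vec (g x) :: real^1)"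
  have "bounded_linear (Finite_Cartesian_Product.vec :: real \<Rightarrow> real^1)"
    by (rule linear_conv_bounded_linear[THEN iffD1], rule linear_vec)
  from absolutely_integrable_linear[OF g this] have G: "G absolutely_integrable_on ball 0 r"
    by (simp add: G_def o_def)
  have GT: "(G \<circ> T) absolutely_integrable_on ball 0 r"
    and GTi: "integral (ball 0 r) (G \<circ> T) = integral (ball 0 r) G"
    using orthogonal_change_of_variables[OF T G] by auto
  have "g \<circ> T = (\<lambda>v. v $ 1) \<circ> (G \<circ> T)" by (auto simp: G_def)
  then show "(g \<circ> T) absolutely_integrable_on ball 0 r"
    using absolutely_integrable_linear[OF GT bounded_linear_vec_nth] by simp
  have "integral (ball 0 r) (\<lambda>x. (G \<circ> T) x $ 1) = integral (ball 0 r) (G \<circ> T) $ 1"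
    "integral (ball 0 r) (\<lambda>x. G x $ 1) = integral (ball 0 r) G $ 1"
    by (rule integral_component_eq_cart, rule set_lebesgue_integral_eq_integral(1), fact)+
  then show "integral (ball 0 r) (g \<circ> T) = integral (ball 0 r) g"
    using GTi by (simp add: G_def o_def)
qed

text \<open>The reflection in the hyperplane orthogonal to a (the identity for a = 0).\<close>
definition reflection :: "'a::real_inner \<Rightarrow> 'a \<Rightarrow> 'a" where
  "reflection a x = x - (2 * (x \<bullet> a) / (a \<bullet> a)) *\<^sub>R a"

lemma orthogonal_reflection: "orthogonal_transformation (reflection a)"
proof (cases "a = 0")
  case True
  then have "reflection a = (\<lambda>x. x)" by (auto simp: reflection_def)
  then show ?thesis by simp
next
  case False
  then have aa: "a \<bullet> a \<noteq> 0" by simp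
  have "linear (reflection a)"
    by (rule linearI) (simp_all add: reflection_def inner_add_left algebra_simps add_divide_distrib)
  moreover have "reflection a v \<bullet> reflection a w = v \<bullet> w" for v w
    using aa by (simp add: reflection_def inner_diff_left inner_diff_right inner_commute
        field_simps power2_eq_square)
  ultimately show ?thesis unfolding orthogonal_transformation_def by blast
qed

lemma reflection_fix: "x \<bullet> a = 0 \<Longrightarrow> reflection a x = x"
  by (simp add: reflection_def)

lemma reflection_self: "reflection a a = - a"
proof (cases "a = 0")
  case False
  then have "2 * (a \<bullet> a) / (a \<bullet> a) = 2" by simp
  then show ?thesis by (simp add: reflection_def scaleR_2)
qed (simp add: reflection_def)

text \<open>A vector field commuting with all orthogonal maps is radial: V(p) is parallel to p,
  since V(p) is fixed by every reflection fixing p.\<close>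
lemma equivariant_field_radial:
  fixes V :: "'a::real_inner \<Rightarrow> 'a"
  assumes equi: "\<And>T p. orthogonal_transformation T \<Longrightarrow> V (T p) = T (V p)"
  shows "V p = ((V p \<bullet> p) / (norm p)^2) *\<^sub>R p"
proof -
  define c where "c = (V p \<bullet> p) / (norm p)^2"
  define w where "w = V p - c *\<^sub>R p"
  have wp: "p \<bullet> w = 0"
    by (cases "p = 0") (simp_all add: w_def c_def inner_diff_right inner_commute flip: power2_norm_eq_inner)
  have "w = 0"
  proof (rule ccontr)
    assume w: "w \<noteq> 0"
    have "V p = V (reflection w p)" using reflection_fix[of p w] wp by (simp add: inner_commute)
    also have "\<dots> = reflection w (V p)" by (rule equi[OF orthogonal_reflection])
    finally have "(2 * (V p \<bullet> w) / (w \<bullet> w)) *\<^sub>R w = 0" by (simp add: reflection_def)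
    then have "V p \<bullet> w = 0" using w by simp
    then have "w \<bullet> w = 0" using wp by (simp add: w_def inner_diff_left inner_commute)
    then show False using w by simp
  qed
  then show ?thesis by (simp add: w_def c_def)
qed

lemma invariant_function_radial:
  fixes f :: "real^'n \<Rightarrow> 'b"
  assumes inv: "\<And>T p. orthogonal_transformation T \<Longrightarrow> f (T p) = f p"
  shows "f p = f (norm p *\<^sub>R axis i (1::real))"
proof -
  have n: "norm (norm p *\<^sub>R axis i (1::real)) = norm p" by simp
  show ?thesis
  proof (rule orthogonal_transformation_exists[OF n])
    fix T assume "orthogonal_transformation T" "T (norm p *\<^sub>R axis i (1::real)) = p"
    then show ?thesis using inv[of T "norm p *\<^sub>R axis i (1::real)"] by simp
  qed
qed

text \<open>Symmetrization: if g(q) + g(T q) \<le> 0 almost everywhere for an orthogonal T, then the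
  integral of g is nonpositive, because it equals half the integral of g + g \<circ> T.\<close>
lemma integral_nonpos_by_symmetrization:
  fixes g :: "real^'m::{finite,wellorder} \<Rightarrow> real"
  assumes g: "g absolutely_integrable_on ball 0 r" and T: "orthogonal_transformation T"
    and N: "negligible N" and pair: "\<And>q. q \<in> ball 0 r - N \<Longrightarrow> g q + g (T q) \<le> 0"
  shows "integral (ball 0 r) g \<le> 0"
proof -
  define h where "h q = (if q \<in> N then 0 else g q + g (T q))" for q
  have gi: "g integrable_on ball 0 r" and gTi: "(g \<circ> T) integrable_on ball 0 r"
    using g orthogonal_change_of_variables_real(1)[OF T g]
    by (simp_all add: set_lebesgue_integral_eq_integral(1))
  have sum: "((\<lambda>q. g q + g (T q)) has_integral 2 * integral (ball 0 r) g) (ball 0 r)"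
    using has_integral_add[OF integrable_integral[OF gi] integrable_integral[OF gTi]]
      orthogonal_change_of_variables_real(2)[OF T g] by (simp add: o_def)
  then have "(h has_integral 2 * integral (ball 0 r) g) (ball 0 r)"
    by (rule has_integral_spike[OF N, rotated]) (simp add: h_def)
  then have "2 * integral (ball 0 r) g \<le> 0"
    by (rule has_integral_le[OF _ has_integral_0]) (use pair in \<open>auto simp: h_def\<close>)
  then show ?thesis by simp
qed

text \<open>Pairing q with its mirror image in the hyperplane orthogonal to p: for c \<le> 0,
  the two contributions of c (q\<cdot>p)/|p - q|^2 add up to c t (1/|p-q|^2 - 1/|p+q|^2) \<le> 0
  with t = q\<cdot>p, because |p + q|^2 = |p - q|^2 + 4t.\<close>
lemma reflection_pair_nonpos:
  fixes p q :: "'a::real_inner" and c :: real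
  assumes c: "c \<le> 0" and q: "q \<noteq> p" "q \<noteq> - p"
  shows "c / (norm (p - q))^2 * (q \<bullet> p)
       + c / (norm (p - reflection p q))^2 * (reflection p q \<bullet> p) \<le> 0"
proof (cases "p = 0")
  case True then show ?thesis by simp
next
  case False
  define t A B where "t = q \<bullet> p" and "A = (norm (p - q))^2" and "B = (norm (p + q))^2"
  have A: "A > 0" using q by (simp add: A_def)
  have B: "B > 0" using q by (auto simp: B_def add_eq_0_iff2 minus_equation_iff[of q])
  have AB: "B = A + 4 * t"
    by (simp add: A_def B_def t_def power2_norm_eq_inner inner_add_left inner_add_right
        inner_diff_left inner_diff_right inner_commute)
  have Rq: "reflection p q \<bullet> p = - t"
    using False by (simp add: reflection_def t_def inner_diff_left)
  have "p - reflection p q = reflection p (- p - q)"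
    using linear_diff[OF orthogonal_transformation_linear[OF orthogonal_reflection[of p]]]
      linear_neg[OF orthogonal_transformation_linear[OF orthogonal_reflection[of p]]]
    by (simp add: reflection_self)
  then have "norm (p - reflection p q) = norm (p + q)"
    using orthogonal_reflection[of p] by (simp add: orthogonal_transformation norm_minus_commute add.commute)
  then have "c / (norm (p - q))^2 * (q \<bullet> p) + c / (norm (p - reflection p q))^2 * (reflection p q \<bullet> p)
      = c * (t * (1 / A - 1 / B))"
    using Rq by (simp add: A_def B_def t_def algebra_simps)
  also have "\<dots> \<le> 0"
  proof -
    have "t * (1 / A - 1 / B) = 4 * t^2 / (A * B)"
      using A B AB by (simp add: field_simps power2_eq_square)
    also have "\<dots> \<ge> 0" using A B by simp
    finally show ?thesis by (rule mult_nonpos_nonneg[OF c])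
  qed
  finally show ?thesis .
qed


section \<open>The convolution integrals for a density in the class B\<close>

locale B_density =
  fixes L :: real and f0 f1 :: "real \<Rightarrow> real" and \<gamma> :: "real^3 \<Rightarrow> complex mat"
  assumes L: "L > 0"
    and f_nonpos: "\<forall>r\<in>{0..<L}. f0 r \<le> 0 \<and> f1 r \<le> 0"
    and \<gamma>_form: "\<And>q. q \<in> ball 0 L \<Longrightarrow> \<gamma> q = dirac_form (f1 (norm q)) (f0 (norm q)) q"
    and \<gamma>_A: "\<gamma> \<in> setA L"
begin

lemma f0_nonpos: "q \<in> ball 0 L \<Longrightarrow> f0 (norm q) \<le> 0"
  and f1_nonpos: "q \<in> ball 0 L \<Longrightarrow> f1 (norm q) \<le> 0"
  using f_nonpos by auto

text \<open>The coefficient functions are read off from entries of \<gamma>, hence measurable.\<close>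
lemma coefficients_measurable:
  fixes k :: 3
  shows "(\<lambda>q::real^3. f0 (norm q)) \<in> borel_measurable (lebesgue_on (ball 0 L))"
    and "(\<lambda>q::real^3. f1 (norm q) * q $ k) \<in> borel_measurable (lebesgue_on (ball 0 L))"
proof -
  have entry: "(\<lambda>q. \<gamma> q $$ (i,j)) \<in> borel_measurable (lebesgue_on (ball 0 L))"
    if "i < 4" "j < 4" for i j
    using \<gamma>_A that by (simp add: setA_def)
  have m: "(\<lambda>q. Re (\<gamma> q $$ (0,0))) \<in> borel_measurable (lebesgue_on (ball 0 L))"
    "(\<lambda>q. Re (\<gamma> q $$ (0,2))) \<in> borel_measurable (lebesgue_on (ball 0 L))"
    "(\<lambda>q. Re (\<gamma> q $$ (0,3))) \<in> borel_measurable (lebesgue_on (ball 0 L))"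
    "(\<lambda>q. - Im (\<gamma> q $$ (0,3))) \<in> borel_measurable (lebesgue_on (ball 0 L))"
    using entry[of 0 0] entry[of 0 2] entry[of 0 3] by measurable
  have vals: "Re (\<gamma> q $$ (0,0)) = f0 (norm q)" "Re (\<gamma> q $$ (0,2)) = f1 (norm q) * q $ 3"
    "Re (\<gamma> q $$ (0,3)) = f1 (norm q) * q $ 1" "- Im (\<gamma> q $$ (0,3)) = f1 (norm q) * q $ 2"
    if "q \<in> ball 0 L" for q :: "real^3"
    using \<gamma>_form[OF that] by (simp_all add: dirac_form_explicit mat_of_rows_list_def)
  have transfer: "g \<in> borel_measurable (lebesgue_on (ball 0 L))"
    if "h \<in> borel_measurable (lebesgue_on (ball 0 L))" "\<And>q. q \<in> ball 0 L \<Longrightarrow> h q = g q"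
    for g h :: "real^3 \<Rightarrow> real"
    using that(1) by (subst measurable_cong[where g=h]) (auto simp: that(2))
  show "(\<lambda>q::real^3. f0 (norm q)) \<in> borel_measurable (lebesgue_on (ball 0 L))"
    by (rule transfer[OF m(1)]) (simp add: vals)
  consider "k = 1" | "k = 2" | "k = 3" using exhaust_3 by blast
  then show "(\<lambda>q::real^3. f1 (norm q) * q $ k) \<in> borel_measurable (lebesgue_on (ball 0 L))"
    by cases (rule transfer[OF m(3)] transfer[OF m(4)] transfer[OF m(2)], simp add: vals)+
qed

lemma coefficients_bounded:
  fixes q :: "real^3" and k :: 3
  assumes q: "q \<in> ball 0 L"
  shows "\<bar>f0 (norm q)\<bar> \<le> 1/2" "\<bar>f1 (norm q) * q $ k\<bar> \<le> 1/2"
proof -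
  have "loewner_le (complex_of_real (-1/2) \<cdot>\<^sub>m 1\<^sub>m 4) (\<gamma> q)"
    using \<gamma>_A q by (simp add: setA_def)
  then have "loewner_le (complex_of_real (-1/2) \<cdot>\<^sub>m 1\<^sub>m 4) (dirac_form (f1 (norm q)) (f0 (norm q)) q)"
    by (simp only: \<gamma>_form[OF q])
  note bounds = dirac_form_lower_bounds[OF this]
  show "\<bar>f0 (norm q)\<bar> \<le> 1/2" using bounds(1) f0_nonpos[OF q] by linarith
  show "\<bar>f1 (norm q) * q $ k\<bar> \<le> 1/2" by (rule bounds(2))
qed

lemma bounded_times_kernel_integrable:
  fixes h :: "real^3 \<Rightarrow> real"
  assumes "h \<in> borel_measurable (lebesgue_on (ball 0 L))" and "\<And>q. q \<in> ball 0 L \<Longrightarrow> \<bar>h q\<bar> \<le> 1/2"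
  shows "(\<lambda>q. h q * (1 / (norm (p - q))^2)) absolutely_integrable_on ball 0 L"
proof (rule absolutely_integrable_bounded_measurable_product[where h="(*)", OF bilinear_times assms(1)])
  show "bounded (h ` ball 0 L)" unfolding bounded_real using assms(2) by blast
  show "(\<lambda>q. 1 / (norm (p - q))^2) absolutely_integrable_on ball 0 L"
    by (rule inverse_power_absolutely_integrable) auto
qed simp

definition S_kernel :: "real^3 \<Rightarrow> real^3 \<Rightarrow> real" where
  "S_kernel p q = f0 (norm q) * (1 / (norm (p - q))^2)"

definition V_kernel :: "real^3 \<Rightarrow> real^3 \<Rightarrow> real^3" where
  "V_kernel p q = (f1 (norm q) * (1 / (norm (p - q))^2)) *\<^sub>R q"

definition S :: "real^3 \<Rightarrow> real" where "S p = integral (ball 0 L) (S_kernel p)"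

definition V :: "real^3 \<Rightarrow> real^3" where "V p = integral (ball 0 L) (V_kernel p)"

lemma S_kernel_integrable: "S_kernel p absolutely_integrable_on ball 0 L"
  unfolding S_kernel_def
  by (rule bounded_times_kernel_integrable[OF coefficients_measurable(1) coefficients_bounded(1)])

lemma V_kernel_integrable: "V_kernel p absolutely_integrable_on ball 0 L"
proof (rule absolutely_integrable_componentwise)
  fix b :: "real^3" assume "b \<in> Basis"
  then obtain k where b: "b = axis k 1" unfolding Basis_vec_def by auto
  have "(\<lambda>q::real^3. (f1 (norm q) * q $ k) * (1 / (norm (p - q))^2)) absolutely_integrable_on ball 0 L"
    by (rule bounded_times_kernel_integrable[OF coefficients_measurable(2) coefficients_bounded(2)])
  then show "(\<lambda>q. V_kernel p q \<bullet> b) absolutely_integrable_on ball 0 L"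
    by (simp add: b inner_axis V_kernel_def mult_ac)
qed

lemma kernels_rotate:
  assumes T: "orthogonal_transformation T"
  shows "S_kernel (T p) \<circ> T = S_kernel p" "V_kernel (T p) \<circ> T = T \<circ> V_kernel p"
proof -
  have "norm (T q) = norm q" "norm (T p - T q) = norm (p - q)" for q
    using T by (simp_all add: orthogonal_transformation orthogonal_transformation_linear
        flip: linear_diff)
  then show "S_kernel (T p) \<circ> T = S_kernel p" "V_kernel (T p) \<circ> T = T \<circ> V_kernel p"
    using T by (auto simp: S_kernel_def V_kernel_def orthogonal_transformation_scaleR)
qed

lemma S_invariant:
  assumes T: "orthogonal_transformation T"
  shows "S (T p) = S p"
proof -
  have "integral (ball 0 L) (S_kernel (T p) \<circ> T) = integral (ball 0 L) (S_kernel (T p))"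
    by (rule orthogonal_change_of_variables_real(2)[OF T S_kernel_integrable])
  then show ?thesis unfolding S_def kernels_rotate(1)[OF T] by simp
qed

lemma V_equivariant:
  assumes T: "orthogonal_transformation T"
  shows "V (T p) = T (V p)"
proof -
  have "V (T p) = integral (ball 0 L) (T \<circ> V_kernel p)"
    using orthogonal_change_of_variables(2)[OF T V_kernel_integrable[of "T p"]] kernels_rotate(2)[OF T]
    by (simp add: V_def)
  also have "\<dots> = T (V p)" unfolding V_def
    by (rule integral_linear[OF set_lebesgue_integral_eq_integral(1)[OF V_kernel_integrable]])
      (use orthogonal_transformation_linear[OF T] in \<open>simp add: linear_conv_bounded_linear\<close>)
  finally show ?thesis .
qed

lemma S_nonpos: "S p \<le> 0"
proof -
  have "integral (ball 0 L) (S_kernel p) \<le> integral (ball 0 L) (\<lambda>_::real^3. 0)"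
  proof (rule Henstock_Kurzweil_Integration.integral_le)
    show "S_kernel p integrable_on ball 0 L"
      by (rule set_lebesgue_integral_eq_integral(1)[OF S_kernel_integrable])
    show "S_kernel p q \<le> 0" if "q \<in> ball 0 L" for q
      using f0_nonpos[OF that] by (simp add: S_kernel_def divide_nonpos_nonneg)
  qed (rule integrable_0)
  then show ?thesis by (simp add: S_def)
qed

text \<open>V(p)\<cdot>p \<le> 0: symmetrize the integrand with the reflection sending p to -p.\<close>
lemma V_inner_nonpos: "V p \<bullet> p \<le> 0"
proof -
  define g where "g q = V_kernel p q \<bullet> p" for q
  have g: "g absolutely_integrable_on ball 0 L"
    unfolding g_def by (rule absolutely_integrable_component[OF V_kernel_integrable])
  have "V p \<bullet> p = integral (ball 0 L) g"
    unfolding V_def g_def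
    by (rule integral_component_eq[symmetric,
          OF set_lebesgue_integral_eq_integral(1)[OF V_kernel_integrable]])
  also have "\<dots> \<le> 0"
  proof (rule integral_nonpos_by_symmetrization[OF g orthogonal_reflection])
    show "negligible {p, -p}" by simp
    fix q assume q: "q \<in> ball 0 L - {p, -p}"
    have "norm (reflection p q) = norm q"
      using orthogonal_reflection[of p] by (simp add: orthogonal_transformation)
    then have "g q + g (reflection p q) = f1 (norm q) / (norm (p - q))^2 * (q \<bullet> p)
        + f1 (norm q) / (norm (p - reflection p q))^2 * (reflection p q \<bullet> p)"
      by (simp add: g_def V_kernel_def)
    also have "\<dots> \<le> 0"
      using q f1_nonpos[of q] by (intro reflection_pair_nonpos) auto
    finally show "g q + g (reflection p q) \<le> 0" .
  qed
  finally show ?thesis .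
qed

lemma convolution_entry:
  assumes ij: "i < 4" "j < 4"
  shows "integral (ball 0 L) (\<lambda>q. \<gamma> q $$ (i,j) / complex_of_real ((norm (p - q))^2))
       = dirac_entry (V p) (S p) (i,j)"
proof -
  have "integral (ball 0 L) (\<lambda>q. \<gamma> q $$ (i,j) / complex_of_real ((norm (p - q))^2))
      = integral (ball 0 L) (\<lambda>q. dirac_entry (V_kernel p q) (S_kernel p q) (i,j))"
  proof (rule integral_cong)
    fix q :: "real^3" assume q: "q \<in> ball 0 L"
    define d where "d = (norm (p - q))^2"
    have "\<gamma> q $$ (i,j) / complex_of_real d = complex_of_real (1 / d) * \<gamma> q $$ (i,j)"
      by simp
    also have "\<dots> = complex_of_real (1 / d) * dirac_entry (f1 (norm q) *\<^sub>R q) (f0 (norm q)) (i,j)"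
      using ij by (simp add: \<gamma>_form[OF q] dirac_form_entry)
    also have "\<dots> = dirac_entry (V_kernel p q) (S_kernel p q) (i,j)"
      unfolding dirac_entry_scale by (simp add: V_kernel_def S_kernel_def d_def mult.commute)
    finally show "\<gamma> q $$ (i,j) / complex_of_real ((norm (p - q))^2)
        = dirac_entry (V_kernel p q) (S_kernel p q) (i,j)"
      unfolding d_def .
  qed
  also have "\<dots> = dirac_entry (V p) (S p) (i,j)"
    unfolding V_def S_def
    by (intro integral_dirac_entry set_lebesgue_integral_eq_integral(1)
        V_kernel_integrable S_kernel_integrable)
  finally show ?thesis .
qed

lemma Dgamma_carrier: "Dgamma a L \<gamma> p \<in> carrier_mat 4 4"
  unfolding Dgamma_def D0_eq_dirac_form
  by (intro minus_carrier_mat smult_carrier_mat mat_carrier dirac_form_carrier)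

lemma Dgamma_eq:
  assumes Vc: "V p = c *\<^sub>R p"
  shows "Dgamma a L \<gamma> p = dirac_form (1 - a / (2 * pi^2) * c) (1 - a / (2 * pi^2) * S p) p"
proof (rule mat4_eqI[OF Dgamma_carrier dirac_form_carrier])
  fix i j :: nat assume "i \<in> {0,1,2,3}" "j \<in> {0,1,2,3}"
  then have ij: "i < 4" "j < 4" by auto
  have "Dgamma a L \<gamma> p $$ (i,j) = D0 p $$ (i,j) - complex_of_real (a / (2 * pi^2)) *
      integral (ball 0 L) (\<lambda>q. \<gamma> q $$ (i,j) / complex_of_real ((norm (p - q))^2))"
    using ij by (simp add: Dgamma_def D0_eq_dirac_form)
  also have "\<dots> = dirac_entry p 1 (i,j)
      - complex_of_real (a / (2 * pi^2)) * dirac_entry (c *\<^sub>R p) (S p) (i,j)"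
    unfolding convolution_entry[OF ij] Vc D0_eq_dirac_form dirac_form_entry[OF ij] by simp
  also have "\<dots> = dirac_form (1 - a / (2 * pi^2) * c) (1 - a / (2 * pi^2) * S p) p $$ (i,j)"
    unfolding dirac_entry_scale dirac_entry_diff dirac_form_entry[OF ij] by (simp add: scaleR_diff_left)
  finally show "Dgamma a L \<gamma> p $$ (i,j)
      = dirac_form (1 - a / (2 * pi^2) * c) (1 - a / (2 * pi^2) * S p) p $$ (i,j)" .
qed

lemma Dgamma_radial_form:
  assumes a: "a \<ge> 0"
  shows "\<exists>d0 d1 :: real \<Rightarrow> real. (\<forall>r. 1 \<le> d1 r \<and> 1 \<le> d0 r)
    \<and> (\<forall>p. Dgamma a L \<gamma> p = dirac_form (d1 (norm p)) (d0 (norm p)) p)"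
proof -
  define \<kappa> where "\<kappa> = a / (2 * pi^2)"
  define c where "c p = (V p \<bullet> p) / (norm p)^2" for p
  define e :: "real^3" where "e = axis 1 1"
  have c_inv: "c (T p) = c p" if T: "orthogonal_transformation T" for T p
  proof -
    have "T (V p) \<bullet> T p = V p \<bullet> p" using T by (simp add: orthogonal_transformation_def)
    moreover have "norm (T p) = norm p" using T by (simp add: orthogonal_transformation)
    ultimately show ?thesis by (simp add: c_def V_equivariant[OF T])
  qed
  have D: "Dgamma a L \<gamma> p = dirac_form (1 - \<kappa> * c p) (1 - \<kappa> * S p) p" for p
    unfolding \<kappa>_def c_def by (rule Dgamma_eq[OF equivariant_field_radial[OF V_equivariant]])
  have radial: "c p = c (norm p *\<^sub>R e)" "S p = S (norm p *\<^sub>R e)" for p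
    unfolding e_def
    by (rule invariant_function_radial, erule c_inv, rule invariant_function_radial, erule S_invariant)
  have sign: "1 \<le> 1 - \<kappa> * c q \<and> 1 \<le> 1 - \<kappa> * S q" for q
  proof -
    have "\<kappa> \<ge> 0" "c q \<le> 0"
      using a V_inner_nonpos[of q] by (simp_all add: \<kappa>_def c_def divide_nonpos_nonneg)
    then show ?thesis using S_nonpos[of q] by (simp add: mult_nonneg_nonpos)
  qed
  have D_radial: "Dgamma a L \<gamma> p
      = dirac_form (1 - \<kappa> * c (norm p *\<^sub>R e)) (1 - \<kappa> * S (norm p *\<^sub>R e)) p" for p
    unfolding radial[symmetric] by (rule D)
  show ?thesis
    by (rule exI[of _ "\<lambda>r. 1 - \<kappa> * S (r *\<^sub>R e)"], rule exI[of _ "\<lambda>r. 1 - \<kappa> * c (r *\<^sub>R e)"])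
      (simp add: sign D_radial)
qed

end

theorem mainTheorem9:
  fixes \<alpha> \<Lambda> :: real and \<gamma> :: "real^3 \<Rightarrow> complex mat"
  assumes "\<Lambda> > 0" and "\<alpha> \<ge> 0" and "\<gamma> \<in> setB \<Lambda>"
  shows "(\<exists>d0 d1 :: real \<Rightarrow> real. (\<forall>r\<in>{0..<\<Lambda>}. d1 r \<ge> 1 \<and> d0 r \<ge> 1) \<and>
           (AE p in lebesgue_on (ball 0 \<Lambda>).
              Dgamma \<alpha> \<Lambda> \<gamma> p = complex_of_real (d1 (norm p)) \<cdot>\<^sub>m alpha_dot p
                               + complex_of_real (d0 (norm p)) \<cdot>\<^sub>m dirac_beta))
       \<and> (AE p in lebesgue_on (ball 0 \<Lambda>).
              loewner_le (mat_abs (D0 p)) (mat_abs (Dgamma \<alpha> \<Lambda> \<gamma> p))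
            \<and> loewner_le (complex_of_real (norm p) \<cdot>\<^sub>m 1\<^sub>m 4) (mat_abs (D0 p)))"
proof -
  obtain f0 f1 :: "real \<Rightarrow> real" where "\<gamma> \<in> setA \<Lambda>" and "\<forall>r\<in>{0..<\<Lambda>}. f0 r \<le> 0 \<and> f1 r \<le> 0"
    and "\<forall>p\<in>ball 0 \<Lambda>. \<gamma> p = complex_of_real (f1 (norm p)) \<cdot>\<^sub>m alpha_dot p
                              + complex_of_real (f0 (norm p)) \<cdot>\<^sub>m dirac_beta"
    using assms(3) unfolding setB_def by blast
  then interpret B_density \<Lambda> f0 f1 \<gamma>
    by unfold_locales (use assms(1) in \<open>auto simp: dirac_form_def\<close>)
  obtain d0 d1 :: "real \<Rightarrow> real" where d: "\<forall>r. 1 \<le> d1 r \<and> 1 \<le> d0 r"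
    and D: "\<forall>p. Dgamma \<alpha> \<Lambda> \<gamma> p = dirac_form (d1 (norm p)) (d0 (norm p)) p"
    using Dgamma_radial_form[OF assms(2)] by blast
  have D_expanded: "Dgamma \<alpha> \<Lambda> \<gamma> p = complex_of_real (d1 (norm p)) \<cdot>\<^sub>m alpha_dot p
      + complex_of_real (d0 (norm p)) \<cdot>\<^sub>m dirac_beta" for p
    using D by (simp add: dirac_form_def)
  have "\<exists>d0 d1 :: real \<Rightarrow> real. (\<forall>r\<in>{0..<\<Lambda>}. d1 r \<ge> 1 \<and> d0 r \<ge> 1) \<and>
      (AE p in lebesgue_on (ball 0 \<Lambda>). Dgamma \<alpha> \<Lambda> \<gamma> p
         = complex_of_real (d1 (norm p)) \<cdot>\<^sub>m alpha_dot p + complex_of_real (d0 (norm p)) \<cdot>\<^sub>m dirac_beta)"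
    by (rule exI[of _ d0], rule exI[of _ d1]) (simp add: d D_expanded)
  moreover have "AE p in lebesgue_on (ball 0 \<Lambda>).
      loewner_le (mat_abs (D0 p)) (mat_abs (Dgamma \<alpha> \<Lambda> \<gamma> p))
      \<and> loewner_le (complex_of_real (norm p) \<cdot>\<^sub>m 1\<^sub>m 4) (mat_abs (D0 p))"
    unfolding D[rule_format] using d
    by (intro AE_I2 conjI mat_abs_D0_le_dirac_form norm_le_mat_abs_D0) auto
  ultimately show ?thesis by (rule conjI)
qed

end
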